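(* For every positive integer $n$, as formal power series in $x$, $$\frac{\mathrm{ODP}(\mathrm{Tour}_n,\mathrm{Cycle}_n)}{(1-x)^n}=n\sum_{m=0}^{\infty}m^{n-1}x^m,$$ with the convention $0^0=1$.
   Context: $\mathrm{Tour}_n$ is the directed graph on $[n]$ with edges $i\to j$ for all $n\ge i>j\ge1$. For $n\ge2$, $\mathrm{Cycle}_n$ is the directed multigraph on $[n]$ with edges $i\to i+1$ ($1\le i\le n-1$) and $n\to1$; for $n=2$ its edges are $1\to2$ and $2\to1$. $\mathrm{Cycle}_1$ is a single vertex (loops are irrelevant). For directed graphs $X,Y$ with $|V(X)|=|V(Y)|$, $\mathrm{DFS}(X,Y)$ has as vertices the bijections $\sigma:V(X)\to V(Y)$. For each $\sigma$ and ordered pair $(a,b)$ of distinct vertices, it has $m_X(a,b)m_Y(\sigma(a),\sigma(b))$ edges from $\sigma$ to $\sigma\circ(a\,b)$, where $m_X(a,b)$ is the number of edges $a\to b$ in $X$. Thus $\mathrm{outdeg}(\sigma)=\sum_{a\ne b}m_X(a,b)m_Y(\sigma(a),\sigma(b))$ and $\mathrm{ODP}(X,Y)=\sum_\sigma x^{\mathrm{outdeg}(\sigma)}$. *)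

theory Defs
  imports "HOL-Combinatorics.Permutations" "HOL-Computational_Algebra.Formal_Power_Series"
begin

definition tour_mult :: "nat \<Rightarrow> nat \<Rightarrow> nat \<Rightarrow> nat" where
  "tour_mult n a b = (if b \<ge> 1 \<and> b < a \<and> a \<le> n then 1 else 0)"

text \<open>Edge multiplicity of Cycle_n (n >= 2): edges i -> i+1 (1 <= i <= n-1) and n -> 1.
  For n = 2 this gives edges 1 -> 2 and 2 -> 1. For n = 1 the only candidate is the loop 1 -> 1,
  which is irrelevant since only pairs of distinct vertices are counted.\<close>
definition cycle_mult :: "nat \<Rightarrow> nat \<Rightarrow> nat \<Rightarrow> nat" where
  "cycle_mult n a b =
     (if 1 \<le> a \<and> a + 1 \<le> n \<and> b = a + 1 then 1 else 0) + (if a = n \<and> b = 1 then 1 else 0)"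

text \<open>Out-degree of the vertex sigma in DFS(X,Y), for X, Y on vertex set [n].\<close>
definition dfs_outdeg :: "nat \<Rightarrow> (nat \<Rightarrow> nat \<Rightarrow> nat) \<Rightarrow> (nat \<Rightarrow> nat \<Rightarrow> nat) \<Rightarrow> (nat \<Rightarrow> nat) \<Rightarrow> nat" where
  "dfs_outdeg n mX mY \<sigma> = (\<Sum>a\<in>{1..n}. \<Sum>b\<in>{1..n} - {a}. mX a b * mY (\<sigma> a) (\<sigma> b))"

definition ODP :: "nat \<Rightarrow> (nat \<Rightarrow> nat \<Rightarrow> nat) \<Rightarrow> (nat \<Rightarrow> nat \<Rightarrow> nat) \<Rightarrow> real fps" where
  "ODP n mX mY = (\<Sum>\<sigma>\<in>{\<sigma>. \<sigma> permutes {1..n}}. fps_X ^ dfs_outdeg n mX mY \<sigma>)"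

end

theory Submission
  imports Defs "HOL-Combinatorics.Multiset_Permutations"
begin

text \<open>
  In the directed graph of the theorem, \<open>\<sigma>\<close> has an edge to \<open>\<sigma> \<circ> (a b)\<close> exactly when \<open>a > b\<close>
  and \<open>\<sigma> b\<close> follows \<open>\<sigma> a\<close> on the cycle, so \<open>b\<close> is determined by \<open>a\<close> and the out-degree of
  \<open>\<sigma>\<close> is the number of cyclic descents of the word \<open>\<sigma>\<^sup>-\<^sup>1(1) \<dots> \<sigma>\<^sup>-\<^sup>1(n)\<close>.
  Cyclic descents are invariant under rotation, each rotation class of words contains exactly
  one word starting with the letter \<open>n\<close>, and \<open>n w\<close> has \<open>1 + des w\<close> cyclic descents.
  Hence \<open>ODP = n X A\<^sub>n\<^sub>-\<^sub>1(X)\<close> for \<open>n \<ge> 2\<close>, where \<open>A\<^sub>k\<close> is the Eulerian polynomial.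
  Inserting the letter \<open>k + 1\<close> into a word gives the recurrence
  \<open>A\<^sub>k\<^sub>+\<^sub>1 = (1 + k X) A\<^sub>k + X (1 - X) A\<^sub>k'\<close>, from which Carlitz's identity
  \<open>A\<^sub>k = (1 - X)\<^sup>k\<^sup>+\<^sup>1 \<Sum>\<^sub>m (m + 1)\<^sup>k X\<^sup>m\<close> follows by induction.
\<close>

fun descents :: "'a::linorder list \<Rightarrow> nat" where
  "descents (a # b # xs) = (if b < a then 1 else 0) + descents (b # xs)"
| "descents _ = 0"

lemma descents_Cons: "descents (a # xs) = (if xs \<noteq> [] \<and> hd xs < a then 1 else 0) + descents xs"
  by (cases xs) auto

lemma descents_snoc:
  "descents (xs @ [b]) = descents xs + (if xs \<noteq> [] \<and> b < last xs then 1 else 0)"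
  by (induction xs) (auto simp: descents_Cons)

lemma descents_less_length: "xs \<noteq> [] \<Longrightarrow> descents xs < length xs"
  by (induction xs rule: descents.induct) auto

lemma descents_conv_sum:
  "descents xs = (\<Sum>i<length xs - 1. if xs ! Suc i < xs ! i then 1 else 0)"
proof (induction xs rule: descents.induct)
  case (1 a b xs)
  show ?case
    unfolding descents.simps(1) 1 by (simp add: sum.lessThan_Suc_shift del: sum.lessThan_Suc)
qed auto

lemma descents_Cons_greater:
  assumes "xs \<noteq> []" "\<forall>y\<in>set xs. y < x"
  shows "descents (x # xs) = Suc (descents xs)"
  using assms by (cases xs) auto

definition insert_nth :: "nat \<Rightarrow> 'a \<Rightarrow> 'a list \<Rightarrow> 'a list" where
  "insert_nth i x xs = take i xs @ x # drop i xs"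

lemma insert_nth_0 [simp]: "insert_nth 0 x xs = x # xs"
  by (simp add: insert_nth_def)

lemma insert_nth_Suc_Cons [simp]: "insert_nth (Suc i) x (a # xs) = a # insert_nth i x xs"
  by (simp add: insert_nth_def)

lemma sum_descents_insert_nth_greater:
  fixes xs :: "'a::linorder list"
  assumes "\<forall>y\<in>set xs. y < x"
  shows "(\<Sum>i\<le>length xs. fps_X ^ descents (insert_nth i x xs) :: 'b::comm_ring_1 fps)
     = of_nat (Suc (descents xs)) * fps_X ^ descents xs
       + of_nat (length xs - descents xs) * fps_X ^ Suc (descents xs)"
  using assms
proof (induction xs)
  case (Cons a ys)
  have "a < x" and "\<not> x < a"
    using Cons.prems by (auto simp: not_less_iff_gr_or_eq)
  show ?case
  proof (cases "ys = []")
    case False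
    define e where "e = descents ys"
    define c :: nat where "c = (if hd ys < a then 1 else 0)"
    have des_a_ys: "descents (a # ys) = c + e"
      and des_x_ys: "descents (x # ys) = Suc e" and des_a_x_ys: "descents (a # x # ys) = Suc e"
      using False Cons.prems \<open>\<not> x < a\<close> by (simp_all add: c_def e_def descents_Cons descents_Cons_greater)
    have des_a_ins: "descents (a # insert_nth (Suc j) x ys) = c + descents (insert_nth (Suc j) x ys)" for j
      using False by (cases ys) (simp_all add: c_def descents_Cons)
    obtain r where r: "length ys = e + Suc r"
      using descents_less_length[OF False] less_imp_Suc_add by (fastforce simp: e_def)
    define R :: "'b fps" where "R = (\<Sum>j<length ys. fps_X ^ descents (insert_nth (Suc j) x ys))"
    have "fps_X ^ Suc e + R = of_nat (Suc e) * fps_X ^ e + of_nat (Suc r) * fps_X ^ Suc e"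
      using Cons.IH Cons.prems des_x_ys r by (simp add: R_def e_def sum.atMost_shift)
    then have R: "R = of_nat (Suc e) * fps_X ^ e + of_nat r * fps_X ^ Suc e"
      by (simp add: algebra_simps)
    have "(\<Sum>i\<le>length (a # ys). fps_X ^ descents (insert_nth i x (a # ys)) :: 'b fps)
        = fps_X ^ descents (x # a # ys) + fps_X ^ descents (a # x # ys) + fps_X ^ c * R"
      unfolding length_Cons sum.atMost_Suc_shift insert_nth_0 insert_nth_Suc_Cons
        sum.atMost_shift[where n = "length ys"]
      by (simp add: R_def des_a_ins power_add sum_distrib_left add.assoc)
    also have "\<dots> = fps_X ^ Suc (c + e) + fps_X ^ Suc e + fps_X ^ c * R"
      using descents_Cons_greater[of "a # ys" x] Cons.prems by (simp only: des_a_ys des_a_x_ys) simp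
    finally show ?thesis
      unfolding des_a_ys R using r by (simp add: c_def algebra_simps)
  qed (simp add: \<open>a < x\<close> \<open>\<not> x < a\<close>)
qed simp

lemma set_insert_nth [simp]: "set (insert_nth i x xs) = insert x (set xs)"
  by (metis insert_nth_def append_take_drop_id set_append Un_insert_right list.set(2))

lemma distinct_insert_nth [simp]: "distinct (insert_nth i x xs) \<longleftrightarrow> x \<notin> set xs \<and> distinct xs"
  by (metis insert_nth_def append_take_drop_id distinct.simps(2) distinct_append set_append
      Un_iff disjoint_insert(1) list.set(2))

lemma inj_on_insert_nth:
  "inj_on (\<lambda>(xs, i). insert_nth i x xs) {(xs, i). x \<notin> set xs \<and> i \<le> length xs}"
proof (rule inj_onI, clarsimp)
  fix xs ys i j
  assume "x \<notin> set xs" "i \<le> length xs" "x \<notin> set ys" "j \<le> length ys"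
    and eq: "insert_nth i x xs = insert_nth j x ys"
  have "filter (\<lambda>y. y \<noteq> x) (insert_nth i x zs) = zs"
    and "takeWhile (\<lambda>y. y \<noteq> x) (insert_nth i x zs) = take i zs" if "x \<notin> set zs" for i zs
  proof -
    have "filter (\<lambda>y. y \<noteq> x) (insert_nth i x zs) = filter (\<lambda>y. y \<noteq> x) (take i zs @ drop i zs)"
      by (simp add: insert_nth_def del: append_take_drop_id)
    then show "filter (\<lambda>y. y \<noteq> x) (insert_nth i x zs) = zs"
      using that by (auto simp: filter_id_conv)
    show "takeWhile (\<lambda>y. y \<noteq> x) (insert_nth i x zs) = take i zs"
      using that unfolding insert_nth_def by (subst takeWhile_append2) (auto dest: in_set_takeD)
  qed
  from this[OF \<open>x \<notin> set xs\<close>, of i] this[OF \<open>x \<notin> set ys\<close>, of j] eq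
  have "xs = ys" "take i xs = take j ys" by simp_all
  with \<open>i \<le> length xs\<close> \<open>j \<le> length ys\<close> show "xs = ys \<and> i = j"
    by (metis length_take min.absorb2)
qed

lemma bij_betw_insert_nth_permutations_of_set:
  assumes "finite A" "x \<notin> A"
  shows "bij_betw (\<lambda>(xs, i). insert_nth i x xs)
           (permutations_of_set A \<times> {..card A}) (permutations_of_set (insert x A))"
proof -
  let ?f = "\<lambda>(xs, i). insert_nth i x xs" and ?D = "permutations_of_set A \<times> {..card A}"
  have "?D \<subseteq> {(xs, i). x \<notin> set xs \<and> i \<le> length xs}"
    using assms by (auto simp: length_finite_permutations_of_set dest: permutations_of_setD)
  then have inj: "inj_on ?f ?D"
    by (rule inj_on_subset[OF inj_on_insert_nth])
  have sub: "?f ` ?D \<subseteq> permutations_of_set (insert x A)"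
    using assms by (auto simp: permutations_of_set_def)
  have "card (?f ` ?D) = card (permutations_of_set (insert x A))"
    using assms by (simp add: card_image[OF inj] card_cartesian_product algebra_simps)
  then have "?f ` ?D = permutations_of_set (insert x A)"
    using sub by (simp add: card_subset_eq)
  with inj show ?thesis
    unfolding bij_betw_def by blast
qed

definition eulerian_fps :: "nat \<Rightarrow> 'a::comm_ring_1 fps" where
  "eulerian_fps k = (\<Sum>w\<in>permutations_of_set {1..k}. fps_X ^ descents w)"

lemma descents_le_card:
  assumes "w \<in> permutations_of_set A"
  shows "descents w \<le> card A"
  using descents_less_length[of w] length_finite_permutations_of_set[OF assms]
  by (cases w) auto

lemma fps_X_power_eulerian_step:
  assumes "d \<le> k"
  shows "of_nat (Suc d) * fps_X ^ d + of_nat (k - d) * fps_X ^ Suc d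
    = (1 + of_nat k * fps_X) * fps_X ^ d + fps_X * (1 - fps_X) * fps_deriv (fps_X ^ d :: 'a::comm_ring_1 fps)"
proof -
  obtain r where k: "k = d + r" using assms le_Suc_ex by blast
  show ?thesis
  proof (cases d)
    case (Suc d')
    show ?thesis unfolding k Suc fps_deriv_power' by (simp add: algebra_simps)
  qed (simp add: k algebra_simps)
qed

lemma eulerian_fps_Suc:
  "eulerian_fps (Suc k) = (1 + of_nat k * fps_X) * eulerian_fps k
     + fps_X * (1 - fps_X) * fps_deriv (eulerian_fps k :: 'a::comm_ring_1 fps)"
proof -
  let ?P = "permutations_of_set {1..k}"
  have "eulerian_fps (Suc k) = (\<Sum>(w, i)\<in>?P \<times> {..k}. fps_X ^ descents (insert_nth i (Suc k) w) :: 'a fps)"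
    using sum.reindex_bij_betw[OF bij_betw_insert_nth_permutations_of_set[of "{1..k}" "Suc k"],
        of "\<lambda>w. fps_X ^ descents w", symmetric]
    by (simp add: eulerian_fps_def atLeastAtMostSuc_conv case_prod_unfold)
  also have "\<dots> = (\<Sum>w\<in>?P. \<Sum>i\<le>k. fps_X ^ descents (insert_nth i (Suc k) w))"
    by (simp add: sum.cartesian_product)
  also have "\<dots> = (\<Sum>w\<in>?P. of_nat (Suc (descents w)) * fps_X ^ descents w
                           + of_nat (k - descents w) * fps_X ^ Suc (descents w))"
  proof (rule sum.cong[OF refl])
    fix w assume "w \<in> ?P"
    then have "\<forall>y\<in>set w. y < Suc k" "length w = k"
      by (auto simp: length_finite_permutations_of_set dest: permutations_of_setD)
    then show "(\<Sum>i\<le>k. fps_X ^ descents (insert_nth i (Suc k) w)) = of_nat (Suc (descents w)) * fps_X ^ descents w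
                           + of_nat (k - descents w) * (fps_X ^ Suc (descents w) :: 'a fps)"
      using sum_descents_insert_nth_greater[of w "Suc k"] by simp
  qed
  also have "\<dots> = (\<Sum>w\<in>?P. (1 + of_nat k * fps_X) * fps_X ^ descents w
                           + fps_X * (1 - fps_X) * fps_deriv (fps_X ^ descents w))"
    using descents_le_card by (intro sum.cong refl fps_X_power_eulerian_step) fastforce
  finally show ?thesis
    by (simp add: eulerian_fps_def fps_deriv_sum sum.distrib sum_distrib_left)
qed

lemma eulerian_fps_eq:
  "eulerian_fps k = (1 - fps_X) ^ Suc k * Abs_fps (\<lambda>m. of_nat (Suc m) ^ k :: 'a::comm_ring_1)"
proof (induction k)
  case 0
  have "(1 - fps_X) * Abs_fps (\<lambda>m. 1 :: 'a) = 1"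
    by (rule fps_ext) (simp add: algebra_simps)
  then show ?case by (simp add: eulerian_fps_def)
next
  case (Suc k)
  let ?S = "\<lambda>k. Abs_fps (\<lambda>m. of_nat (Suc m) ^ k :: 'a)"
  have S_Suc: "?S (Suc k) = fps_deriv (fps_X * ?S k)"
    by (rule fps_ext) (simp add: distrib_right)
  have deriv: "fps_deriv (eulerian_fps k) = - of_nat (Suc k) * (1 - fps_X) ^ k * ?S k
          + (1 - fps_X) ^ Suc k * fps_deriv (?S k)"
    unfolding Suc fps_deriv_mult fps_deriv_power' by (simp add: algebra_simps)
  show ?case
    unfolding eulerian_fps_Suc S_Suc deriv unfolding Suc by (simp add: algebra_simps)
qed

lemma inj_rotate: "inj (rotate n)"
  unfolding rotate_def using bij_betw_funpow[OF bij_rotate1] by (rule bij_is_inj)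

lemma bij_betw_rotate_permutations_of_set:
  "bij_betw (rotate n) (permutations_of_set A) (permutations_of_set A)"
proof (rule bij_betw_imageI)
  show inj: "inj_on (rotate n) (permutations_of_set A)"
    using inj_rotate by (rule inj_on_subset) simp
  have "rotate n ` permutations_of_set A \<subseteq> permutations_of_set A"
    by (auto simp: permutations_of_set_def)
  with inj show "rotate n ` permutations_of_set A = permutations_of_set A"
    by (simp add: endo_inj_surj)
qed

lemma sum_permutations_of_set_rotation_invariant:
  fixes f :: "'a list \<Rightarrow> 'b::comm_semiring_1"
  assumes "finite A" "x \<in> A" and rotate_invariant: "\<And>j w. f (rotate j w) = f w"
  shows "(\<Sum>w\<in>permutations_of_set A. f w)
           = of_nat (card A) * (\<Sum>w\<in>permutations_of_set A. if hd w = x then f w else 0)"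
proof -
  let ?P = "permutations_of_set A" and ?n = "card A"
  let ?g = "\<lambda>w. if hd w = x then f w else 0"
  have orbit: "f w = (\<Sum>j<?n. ?g (rotate j w))" if "w \<in> ?P" for w
  proof -
    have "length w = ?n" "distinct w" "x \<in> set w"
      using that assms by (auto simp: length_finite_permutations_of_set dest: permutations_of_setD)
    then obtain p where p: "p < ?n" "w ! p = x"
      by (auto simp: in_set_conv_nth)
    have "hd (rotate j w) = x \<longleftrightarrow> j = p" if "j < ?n" for j
    proof -
      have "hd (rotate j w) = w ! j"
        using that \<open>length w = ?n\<close> \<open>x \<in> set w\<close> by (subst hd_rotate_conv_nth) auto
      then show ?thesis
        using that p \<open>length w = ?n\<close> \<open>distinct w\<close> nth_eq_iff_index_eq[of w j p] by auto
    qed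
    then have "(\<Sum>j<?n. ?g (rotate j w)) = (\<Sum>j<?n. if j = p then f w else 0)"
      by (intro sum.cong) (auto simp: rotate_invariant)
    then show ?thesis using p by simp
  qed
  have "(\<Sum>w\<in>?P. f w) = (\<Sum>j<?n. \<Sum>w\<in>?P. ?g (rotate j w))"
    by (simp add: orbit sum.swap[of _ "{..<?n}"] cong: sum.cong)
  also have "\<dots> = (\<Sum>j<?n. \<Sum>w\<in>?P. ?g w)"
    by (intro sum.cong refl sum.reindex_bij_betw bij_betw_rotate_permutations_of_set)
  finally show ?thesis by simp
qed

lemma permutations_of_set_hd_eq:
  assumes "x \<in> A"
  shows "{w \<in> permutations_of_set A. hd w = x} = (\<lambda>w. x # w) ` permutations_of_set (A - {x})"
proof (intro equalityI subsetI)
  fix w assume w: "w \<in> {w \<in> permutations_of_set A. hd w = x}"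
  moreover from w assms have "w \<noteq> []"
    by (auto simp: permutations_of_set_def)
  ultimately obtain ys where w_eq: "w = x # ys"
    by (cases w) auto
  with w have "ys \<in> permutations_of_set (A - {x})"
    by (auto simp: permutations_of_set_def)
  then show "w \<in> (\<lambda>w. x # w) ` permutations_of_set (A - {x})"
    unfolding w_eq by (rule imageI)
next
  fix w assume "w \<in> (\<lambda>w. x # w) ` permutations_of_set (A - {x})"
  then obtain ys where "w = x # ys" "set ys = A - {x}" "distinct ys"
    by (auto simp: permutations_of_set_def)
  with assms show "w \<in> {w \<in> permutations_of_set A. hd w = x}"
    by (auto simp: permutations_of_set_def)
qed
lemma sum_permutations_of_set_hd_eq:
  assumes "x \<in> A"
  shows "(\<Sum>w\<in>permutations_of_set A. if hd w = x then g w else 0)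
           = (\<Sum>w\<in>permutations_of_set (A - {x}). g (x # w))"
  by (simp add: sum.inter_filter[symmetric] permutations_of_set_hd_eq[OF assms] sum.reindex)

definition cyclic_descents :: "'a::linorder list \<Rightarrow> nat" where
  "cyclic_descents w = descents (w @ [hd w])"

lemma cyclic_descents_rotate1 [simp]: "cyclic_descents (rotate1 w) = cyclic_descents w"
proof (cases w)
  case (Cons a ys)
  then show ?thesis
    using descents_snoc[of "ys @ [a]" "hd ys"]
    by (cases "ys = []") (simp_all add: cyclic_descents_def descents_Cons)
qed simp

lemma cyclic_descents_rotate [simp]: "cyclic_descents (rotate n w) = cyclic_descents w"
  by (induction n) simp_all

lemma cyclic_descents_Cons_greater:
  assumes "w \<noteq> []" "\<forall>y\<in>set w. y < x"
  shows "cyclic_descents (x # w) = Suc (descents w)"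
proof -
  have "\<not> x < last w" using assms last_in_set less_not_sym by blast
  then show ?thesis
    using assms by (simp add: cyclic_descents_def descents_Cons descents_snoc hd_append)
qed

definition cyclic_succ :: "nat \<Rightarrow> nat \<Rightarrow> nat" where
  "cyclic_succ n v = (if v < n then Suc v else 1)"

lemma cycle_mult_eq:
  assumes "u \<in> {1..n}"
  shows "cycle_mult n u v = (if v = cyclic_succ n u then 1 else 0)"
  using assms by (auto simp: cycle_mult_def cyclic_succ_def)

lemma dfs_outdeg_tour_cycle:
  assumes n: "n \<ge> 1" and \<sigma>: "\<sigma> permutes {1..n}"
  shows "dfs_outdeg n (tour_mult n) (cycle_mult n) \<sigma>
    = (\<Sum>v\<in>{1..n}. if inv \<sigma> (cyclic_succ n v) < inv \<sigma> v then 1 else 0)"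
proof -
  define c where "c a = inv \<sigma> (cyclic_succ n (\<sigma> a))" for a
  have c_in: "c a \<in> {1..n}" if "a \<in> {1..n}" for a
    using that n permutes_in_image[OF \<sigma>] permutes_in_image[OF permutes_inv[OF \<sigma>]]
    by (auto simp: c_def cyclic_succ_def)
  have edge: "tour_mult n a b * cycle_mult n (\<sigma> a) (\<sigma> b)
      = (if b = c a \<and> c a < a then 1 else 0)" if "a \<in> {1..n}" "b \<in> {1..n}" for a b
  proof -
    have "\<sigma> b = cyclic_succ n (\<sigma> a) \<longleftrightarrow> b = c a"
      unfolding c_def using permutes_inv_eq[OF \<sigma>] by metis
    then show ?thesis
      using that permutes_in_image[OF \<sigma>] by (auto simp: tour_mult_def cycle_mult_eq)
  qed
  have "dfs_outdeg n (tour_mult n) (cycle_mult n) \<sigma>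
      = (\<Sum>a\<in>{1..n}. \<Sum>b\<in>{1..n} - {a}. if b = c a \<and> c a < a then 1 else 0)"
    unfolding dfs_outdeg_def by (intro sum.cong refl) (auto simp: edge)
  also have "\<dots> = (\<Sum>a\<in>{1..n}. if c a < a then 1 else 0)"
    using c_in by (intro sum.cong refl) (auto simp: sum.delta' if_distrib cong: if_cong)
  also have "\<dots> = (\<Sum>v\<in>{1..n}. if c (inv \<sigma> v) < inv \<sigma> v then 1 else 0)"
    using sum.permute[OF permutes_inv[OF \<sigma>], of "\<lambda>a. if c a < a then 1 else 0"] by (simp add: o_def)
  also have "\<dots> = (\<Sum>v\<in>{1..n}. if inv \<sigma> (cyclic_succ n v) < inv \<sigma> v then 1 else 0)"
    unfolding c_def permutes_inverses(1)[OF \<sigma>] ..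
  finally show ?thesis .
qed

lemma cyclic_descents_map_upt:
  assumes "n \<ge> 1"
  shows "cyclic_descents (map \<pi> [1..<Suc n]) = (\<Sum>v\<in>{1..n}. if \<pi> (cyclic_succ n v) < \<pi> v then 1 else 0)"
proof -
  define w where "w = map \<pi> [1..<Suc n] @ [\<pi> 1]"
  have "cyclic_descents (map \<pi> [1..<Suc n]) = descents w"
    using assms by (simp add: cyclic_descents_def w_def hd_map upt_rec)
  also have "\<dots> = (\<Sum>i<n. if w ! Suc i < w ! i then 1 else 0)"
    by (simp add: descents_conv_sum w_def del: upt_Suc)
  also have "\<dots> = (\<Sum>i<n. if \<pi> (cyclic_succ n (Suc i)) < \<pi> (Suc i) then 1 else 0)"
    using assms by (intro sum.cong refl) (auto simp: w_def nth_append cyclic_succ_def simp del: upt_Suc)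
  also have "\<dots> = (\<Sum>v\<in>{1..n}. if \<pi> (cyclic_succ n v) < \<pi> v then 1 else 0)"
    by (simp add: sum.atLeast1_atMost_eq)
  finally show ?thesis .
qed

lemma bij_betw_map_permutes:
  assumes "distinct xs"
  shows "bij_betw (\<lambda>\<pi>. map \<pi> xs) {\<pi>. \<pi> permutes set xs} (permutations_of_set (set xs))"
proof -
  let ?f = "\<lambda>\<pi>. map \<pi> xs" and ?D = "{\<pi>. \<pi> permutes set xs}"
  have inj: "inj_on ?f ?D"
  proof (rule inj_onI, rule ext)
    fix \<pi> \<tau> y assume "\<pi> \<in> ?D" "\<tau> \<in> ?D" "map \<pi> xs = map \<tau> xs"
    then show "\<pi> y = \<tau> y"
      by (cases "y \<in> set xs") (auto simp: permutes_not_in)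
  qed
  have sub: "?f ` ?D \<subseteq> permutations_of_set (set xs)"
    using assms by (auto simp: permutations_of_set_def permutes_image distinct_map permutes_inj_on)
  have "card (?f ` ?D) = card (permutations_of_set (set xs))"
    using assms by (simp add: card_image[OF inj] card_permutations distinct_card)
  then have "?f ` ?D = permutations_of_set (set xs)"
    using sub by (simp add: card_subset_eq)
  with inj show ?thesis
    unfolding bij_betw_def by blast
qed

lemma ODP_tour_cycle_eq_sum_cyclic_descents:
  assumes "n \<ge> 1"
  shows "ODP n (tour_mult n) (cycle_mult n)
           = (\<Sum>w\<in>permutations_of_set {1..n}. fps_X ^ cyclic_descents w)"
proof -
  let ?S = "{\<pi>. \<pi> permutes {1..n}}"
  have "ODP n (tour_mult n) (cycle_mult n) = (\<Sum>\<sigma>\<in>?S. fps_X ^ cyclic_descents (map (inv \<sigma>) [1..<Suc n]))"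
    unfolding ODP_def
    by (intro sum.cong refl) (simp only: mem_Collect_eq dfs_outdeg_tour_cycle[OF assms] cyclic_descents_map_upt[OF assms])
  also have "\<dots> = (\<Sum>\<pi>\<in>?S. fps_X ^ cyclic_descents (map \<pi> [1..<Suc n]))"
    by (rule sum_permutations_inverse[symmetric])
  also have "\<dots> = (\<Sum>w\<in>permutations_of_set {1..n}. fps_X ^ cyclic_descents w)"
    using sum.reindex_bij_betw[OF bij_betw_map_permutes[of "[1..<Suc n]"]]
    by (simp add: atLeastLessThanSuc_atLeastAtMost del: upt_Suc)
  finally show ?thesis .
qed

lemma ODP_tour_cycle_Suc:
  assumes "k \<ge> 1"
  shows "ODP (Suc k) (tour_mult (Suc k)) (cycle_mult (Suc k)) = of_nat (Suc k) * fps_X * eulerian_fps k"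
proof -
  let ?f = "\<lambda>w. fps_X ^ cyclic_descents w :: real fps"
  have "ODP (Suc k) (tour_mult (Suc k)) (cycle_mult (Suc k)) = (\<Sum>w\<in>permutations_of_set {1..Suc k}. ?f w)"
    by (simp add: ODP_tour_cycle_eq_sum_cyclic_descents)
  also have "\<dots> = of_nat (Suc k) * (\<Sum>w\<in>permutations_of_set {1..Suc k}. if hd w = Suc k then ?f w else 0)"
    by (subst sum_permutations_of_set_rotation_invariant[where x = "Suc k"]) simp_all
  also have "\<dots> = of_nat (Suc k) * (\<Sum>w\<in>permutations_of_set {1..k}. ?f (Suc k # w))"
    by (subst sum_permutations_of_set_hd_eq) (simp_all add: atLeastAtMostSuc_conv)
  also have "\<dots> = of_nat (Suc k) * (\<Sum>w\<in>permutations_of_set {1..k}. fps_X * fps_X ^ descents w)"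
  proof -
    have "w \<noteq> [] \<and> (\<forall>y\<in>set w. y < Suc k)" if "w \<in> permutations_of_set {1..k}" for w
      using that assms by (auto simp: permutations_of_set_def)
    then show ?thesis
      by (intro arg_cong[where f = "(*) _"] sum.cong refl) (simp add: cyclic_descents_Cons_greater)
  qed
  finally show ?thesis
    by (simp add: eulerian_fps_def sum_distrib_left mult.assoc)
qed

lemma fps_X_mult_Abs_fps_Suc_power:
  assumes "k \<ge> 1"
  shows "fps_X * Abs_fps (\<lambda>m. of_nat (Suc m) ^ k) = Abs_fps (\<lambda>m. of_nat m ^ k :: 'a::comm_semiring_1)"
proof (rule fps_ext)
  fix m
  show "fps_nth (fps_X * Abs_fps (\<lambda>m. of_nat (Suc m) ^ k)) m = fps_nth (Abs_fps (\<lambda>m. of_nat m ^ k :: 'a)) m"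
    using assms by (cases m) (simp_all add: fps_X_mult_nth power_0_left)
qed

lemma ODP_tour_cycle_eq:
  assumes "n \<ge> 1"
  shows "ODP n (tour_mult n) (cycle_mult n) = of_nat n * (1 - fps_X) ^ n * Abs_fps (\<lambda>m. of_nat m ^ (n - 1))"
proof (cases "n = 1")
  case True
  have "(1 - fps_X) * Abs_fps (\<lambda>m. 1 :: real) = 1"
    by (rule fps_ext) (simp add: algebra_simps)
  with True show ?thesis
    by (simp add: ODP_tour_cycle_eq_sum_cyclic_descents cyclic_descents_def)
next
  case False
  with assms obtain k where n: "n = Suc k" "k \<ge> 1"
    by (cases n) auto
  then show ?thesis
    by (simp add: ODP_tour_cycle_Suc eulerian_fps_eq flip: fps_X_mult_Abs_fps_Suc_power)
qed

theorem mainTheorem14: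
  fixes n :: nat
  assumes "n \<ge> 1"
  shows "ODP n (tour_mult n) (cycle_mult n) / (1 - fps_X) ^ n
           = Abs_fps (\<lambda>m. of_nat n * of_nat m ^ (n - 1))"
proof -
  have "fps_nth ((1 - fps_X :: real fps) ^ n) 0 = 1"
    by (simp add: fps_nth_power_0)
  then have "(1 - fps_X :: real fps) ^ n \<noteq> 0"
    by auto
  moreover have "Abs_fps (\<lambda>m. of_nat n * of_nat m ^ (n - 1)) = of_nat n * Abs_fps (\<lambda>m. of_nat m ^ (n - 1) :: real)"
    by (simp add: fps_eq_iff flip: fps_of_nat)
  ultimately show ?thesis
    by (simp add: ODP_tour_cycle_eq[OF assms] mult_ac)
qed

end
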